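(* Let $\alpha$ be fixed and let $p_1,p_2,\ldots$ be i.i.d. with distribution function $P$ as in the context. Let $q\in[0,1]$ and suppose $P$ is Simes-detectable at $q\alpha$. Then there is a sequence of (data-dependent) sets $(J_m)_{m\ge1}$ with $J_m\subseteq\{1,\ldots,m\}$ such that $q_{\alpha,m}(J_m)\le\bar\pi_\alpha q$ for all $m$, and $\lim_{m\to\infty}\mathrm{P}(|J_m|/m\ge y)=1$ for some $y>0$.
   Context: Efron mixture model: $P(x)=\gamma x+(1-\gamma)P_1(x)$ on $[0,1]$ with $\gamma\in[0,1]$ and $P_1$ a distribution function with $P_1(x)\ge x$. Define $\bar\pi_a=\inf_{0\le x<1}\frac{1-P(xa)}{1-x}$ if $P(a)<1$ and $\bar\pi_a=0$ otherwise. $P$ is Simes-detectable at $a$ if $\bar\pi_a<1$ (equivalently, $P(xa)>x$ for some $0\le x<1$, or $P(a)=1$). For the first $m$ $p$-values: for $I\subseteq\{1,\ldots,m\}$, $p_{(i:I)}$ is the $i$-th smallest of $\{p_j:j\in I\}$; Simes test: $I\in\mathcal{U}_\alpha$ iff some $1\le i\le|I|$ has $|I|p_{(i:I)}\le i\alpha$; $\mathcal{X}_\alpha=\{I: J\in\mathcal{U}_\alpha\ \forall J\supseteq I, J\subseteq\{1,\ldots,m\}\}$; $t_{\alpha,m}(S)=\max\{|I|: I\subseteq S, I\notin\mathcal{X}_\alpha\}$; $q_{\alpha,m}(S)=t_{\alpha,m}(S)/|S|$ for $S\ne\emptyset$ and $0$ for $S=\emptyset$. *)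

theory Defs
  imports "HOL-Probability.Probability"
begin

text \<open>p-values are given as a function x :: nat => real, x j being p_j (indices from 1).\<close>

definition order_stat :: "(nat \<Rightarrow> real) \<Rightarrow> nat set \<Rightarrow> nat \<Rightarrow> real" where
  "order_stat x I i = sort (map x (sorted_list_of_set I)) ! (i - 1)"

definition simes_rejects :: "real \<Rightarrow> (nat \<Rightarrow> real) \<Rightarrow> nat set \<Rightarrow> bool" where
  "simes_rejects \<alpha> x I \<longleftrightarrow>
     (\<exists>i\<in>{1..card I}. real (card I) * order_stat x I i \<le> real i * \<alpha>)"

definition simes_X :: "real \<Rightarrow> nat \<Rightarrow> (nat \<Rightarrow> real) \<Rightarrow> nat set set" where
  "simes_X \<alpha> m x = {I. I \<subseteq> {1..m} \<and>
       (\<forall>J. I \<subseteq> J \<and> J \<subseteq> {1..m} \<longrightarrow> simes_rejects \<alpha> x J)}"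

definition simes_t :: "real \<Rightarrow> nat \<Rightarrow> (nat \<Rightarrow> real) \<Rightarrow> nat set \<Rightarrow> nat" where
  "simes_t \<alpha> m x S = Max (card ` {I. I \<subseteq> S \<and> I \<notin> simes_X \<alpha> m x})"

definition simes_q :: "real \<Rightarrow> nat \<Rightarrow> (nat \<Rightarrow> real) \<Rightarrow> nat set \<Rightarrow> real" where
  "simes_q \<alpha> m x S = (if S = {} then 0 else real (simes_t \<alpha> m x S) / real (card S))"

definition pibar :: "(real \<Rightarrow> real) \<Rightarrow> real \<Rightarrow> real" where
  "pibar P a = (if P a < 1 then (INF x\<in>{0..<1}. (1 - P (x * a)) / (1 - x)) else 0)"

definition simes_detectable :: "(real \<Rightarrow> real) \<Rightarrow> real \<Rightarrow> bool" where
  "simes_detectable P a \<longleftrightarrow> pibar P a < 1"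

end

theory Submission
  imports Defs "HOL-Real_Asymp.Real_Asymp"
begin

text \<open>Detectability at \<open>q \<alpha>\<close> gives \<open>x1 < 1\<close> with \<open>P (x1 q \<alpha>) > x1\<close>.  Let \<open>J\<^sub>m\<close> be the set of
  p-values below \<open>c = x1 q \<alpha>\<close>, kept only if the number \<open>N\<close> of p-values below \<open>x0 \<alpha>\<close>
  satisfies \<open>x1 (m - N) \<le> \<pi>\<^sub>\<alpha> (1 - x0) |J\<^sub>m|\<close>.  Every set containing a subset of \<open>J\<^sub>m\<close> of size
  above \<open>c (m - N) / (\<alpha> (1 - x0))\<close> is rejected by Simes' test, at threshold \<open>c\<close> or at threshold
  \<open>x0 \<alpha>\<close>, so \<open>t\<^sub>\<alpha>\<^sub>,\<^sub>m(J\<^sub>m) \<le> \<pi>\<^sub>\<alpha> q |J\<^sub>m|\<close>.  As \<open>\<pi>\<^sub>\<alpha>\<close> is an infimum, \<open>x0\<close> can be chosen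
  so that the selection condition holds strictly for the population proportions,
  \<open>x1 (1 - P (x0 \<alpha>)) < \<pi>\<^sub>\<alpha> (1 - x0) P c\<close>; by Hoeffding's inequality the empirical proportions
  concentrate, so \<open>|J\<^sub>m| / m \<ge> P c / 2\<close> with probability tending to one.  If \<open>P \<alpha> = 1\<close>, then
  \<open>\<pi>\<^sub>\<alpha> = 0\<close> and \<open>J\<^sub>m = {1..m}\<close> works, since almost surely all p-values lie below \<open>\<alpha>\<close>.\<close>

section \<open>Order statistics and the Simes test\<close>

abbreviation indices_le :: "real \<Rightarrow> nat \<Rightarrow> (nat \<Rightarrow> real) \<Rightarrow> nat set" where
  "indices_le t m x \<equiv> {i\<in>{1..m}. x i \<le> t}"


lemma sorted_nth_le_if_count_le:
  fixes L :: "real list"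
  assumes "sorted L" "1 \<le> i" "i \<le> length (filter (\<lambda>v. v \<le> t) L)"
  shows "L ! (i - 1) \<le> t"
proof (rule ccontr)
  assume "\<not> L ! (i - 1) \<le> t"
  have "filter (\<lambda>v. v \<le> t) (drop (i - 1) L) = []"
  proof (rule filter_False, rule ballI)
    fix v assume "v \<in> set (drop (i - 1) L)"
    then obtain j where "j < length (drop (i - 1) L)" "v = drop (i - 1) L ! j"
      by (auto simp: in_set_conv_nth)
    then have "v = L ! (i - 1 + j)" "i - 1 + j < length L" by auto
    with sorted_nth_mono[OF \<open>sorted L\<close>, of "i - 1" "i - 1 + j"] \<open>\<not> L ! (i - 1) \<le> t\<close>
    show "\<not> v \<le> t" by auto
  qed
  then have "filter (\<lambda>v. v \<le> t) L = filter (\<lambda>v. v \<le> t) (take (i - 1) L)"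
    by (metis append_Nil2 append_take_drop_id filter_append)
  then have "length (filter (\<lambda>v. v \<le> t) L) \<le> i - 1"
    by (metis length_filter_le length_take min.absorb_iff2 min_def order_trans)
  with assms(2,3) show False by linarith
qed

lemma order_stat_le_if_card_le:
  assumes "finite K" "1 \<le> i" "i \<le> card {j\<in>K. x j \<le> t}"
  shows "order_stat x K i \<le> t"
proof -
  have "length (filter (\<lambda>v. v \<le> t) (sort (map x (sorted_list_of_set K))))
      = length (filter (\<lambda>v. v \<le> t) (map x (sorted_list_of_set K)))"
    by (metis mset_filter mset_sort size_mset)
  also have "\<dots> = card {j\<in>K. x j \<le> t}"
    using \<open>finite K\<close> by (simp add: filter_map comp_def distinct_card[symmetric])
  finally show ?thesis
    unfolding order_stat_def using assms by (intro sorted_nth_le_if_count_le) auto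
qed

lemma simes_rejects_if_card_le:
  assumes "finite K" "1 \<le> i" "i \<le> card {j\<in>K. x j \<le> t}"
    and "real (card K) * t \<le> real i * \<alpha>"
  shows "simes_rejects \<alpha> x K"
proof -
  have "card {j\<in>K. x j \<le> t} \<le> card K"
    using \<open>finite K\<close> by (intro card_mono) auto
  with assms(2,3) have "i \<in> {1..card K}" by auto
  moreover have "real (card K) * order_stat x K i \<le> real (card K) * t"
    using order_stat_le_if_card_le[OF assms(1-3)] by (intro mult_left_mono) auto
  ultimately show ?thesis
    unfolding simes_rejects_def using assms(4) by (meson order_trans)
qed

text \<open>A set \<open>K \<supseteq> I\<close> contains at least \<open>r\<close> p-values below \<open>c\<close>, and at least
  \<open>|K| + N - m\<close> below \<open>t\<close>, where \<open>N\<close> counts those among all \<open>m\<close>; either count may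
  make the Simes test reject \<open>K\<close>.\<close>

lemma mem_simes_X_by_two_thresholds:
  assumes I: "I \<subseteq> indices_le c m x" "1 \<le> r" "r \<le> card I"
    and reject: "\<And>k. r \<le> k \<Longrightarrow> k \<le> m \<Longrightarrow> real k * c \<le> real r * \<alpha> \<or>
        (m < k + card (indices_le t m x) \<and>
         real k * t \<le> real (k + card (indices_le t m x) - m) * \<alpha>)"
  shows "I \<in> simes_X \<alpha> m x"
  unfolding simes_X_def
proof (intro CollectI conjI allI impI)
  show "I \<subseteq> {1..m}" using I by auto
  fix K assume K: "I \<subseteq> K \<and> K \<subseteq> {1..m}"
  then have "finite K" using finite_subset by blast
  have "card I \<le> card K" using K \<open>finite K\<close> by (intro card_mono) auto
  with I have "r \<le> card K" by linarith
  moreover have "card K \<le> m" using K card_mono[of "{1..m}" K] by auto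
  ultimately consider "real (card K) * c \<le> real r * \<alpha>"
    | "m < card K + card (indices_le t m x)"
      "real (card K) * t \<le> real (card K + card (indices_le t m x) - m) * \<alpha>"
    using reject by blast
  then show "simes_rejects \<alpha> x K"
  proof cases
    case 1
    have "card I \<le> card {j\<in>K. x j \<le> c}"
      using I K \<open>finite K\<close> by (intro card_mono) auto
    with 1 I show ?thesis by (intro simes_rejects_if_card_le[OF \<open>finite K\<close>, of r]) auto
  next
    case 2
    have "indices_le t m x \<subseteq> {j\<in>K. x j \<le> t} \<union> ({1..m} - K)" by auto
    then have "card (indices_le t m x) \<le> card ({j\<in>K. x j \<le> t} \<union> ({1..m} - K))"
      by (rule card_mono[rotated]) (use \<open>finite K\<close> in auto)
    also have "\<dots> \<le> card {j\<in>K. x j \<le> t} + (m - card K)"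
      using K \<open>finite K\<close> card_Un_le[of "{j\<in>K. x j \<le> t}" "{1..m} - K"]
      by (simp add: card_Diff_subset)
    finally have "card K + card (indices_le t m x) - m \<le> card {j\<in>K. x j \<le> t}"
      using \<open>card K \<le> m\<close> by linarith
    with 2 show ?thesis
      by (intro simes_rejects_if_card_le[OF \<open>finite K\<close>]) auto
  qed
qed

lemma simes_t_le_if_large_subsets_in_simes_X:
  assumes "finite S" "\<And>I. I \<subseteq> S \<Longrightarrow> r \<le> card I \<Longrightarrow> I \<in> simes_X \<alpha> m x"
  shows "simes_t \<alpha> m x S \<le> r - 1"
proof -
  let ?C = "card ` {I. I \<subseteq> S \<and> I \<notin> simes_X \<alpha> m x}"
  have "?C \<subseteq> card ` Pow S" by blast
  then have "finite ?C" using \<open>finite S\<close> by (meson finite_Pow_iff finite_imageI finite_subset)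
  have "\<not> simes_rejects \<alpha> x {}"
    by (simp add: simes_rejects_def)
  then have "{} \<notin> simes_X \<alpha> m x"
    unfolding simes_X_def by blast
  then have "?C \<noteq> {}" by blast
  moreover have "n \<le> r - 1" if "n \<in> ?C" for n
  proof -
    from that obtain I where "I \<subseteq> S" "I \<notin> simes_X \<alpha> m x" "n = card I" by blast
    with assms(2)[of I] show ?thesis by linarith
  qed
  ultimately show ?thesis
    unfolding simes_t_def using \<open>finite ?C\<close> by (blast intro: Max.boundedI)
qed

lemma card_indices_le_le: "card (indices_le t m x) \<le> m"
proof -
  have "card (indices_le t m x) \<le> card {1..m}" by (rule card_mono) auto
  then show ?thesis by simp
qed

lemma simes_t_indices_le_less:
  assumes "0 < \<alpha>" "0 \<le> x0" "x0 < 1" "0 \<le> c" "1 \<le> r"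
    and less: "c * (real m - real (card (indices_le (x0 * \<alpha>) m x))) < real r * \<alpha> * (1 - x0)"
  shows "simes_t \<alpha> m x (indices_le c m x) < r"
proof -
  let ?N = "card (indices_le (x0 * \<alpha>) m x)"
  have "I \<in> simes_X \<alpha> m x" if "I \<subseteq> indices_le c m x" "r \<le> card I" for I
  proof (rule mem_simes_X_by_two_thresholds[OF that(1) \<open>1 \<le> r\<close> that(2)])
    fix k assume "r \<le> k" "k \<le> m"
    show "real k * c \<le> real r * \<alpha> \<or>
      (m < k + ?N \<and> real k * (x0 * \<alpha>) \<le> real (k + ?N - m) * \<alpha>)"
    proof (cases "real k * c \<le> real r * \<alpha>")
      case False
      then have "c > 0"
        using assms(1,4) by (cases "c = 0") auto
      have "c * (real m - real ?N) < real r * \<alpha> * (1 - x0)" by (fact less)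
      also have "\<dots> \<le> real k * c * (1 - x0)"
        using \<open>\<not> real k * c \<le> real r * \<alpha>\<close> assms(3) by (intro mult_right_mono) auto
      finally have "real m - real ?N < real k * (1 - x0)"
        using \<open>c > 0\<close> by (simp add: mult.commute mult.left_commute)
      moreover have "0 \<le> real k * x0" using assms(2) by simp
      ultimately have "m < k + ?N" "real k * x0 \<le> real (k + ?N - m)"
        by (simp_all add: algebra_simps)
      with assms(1) show ?thesis by (simp add: mult.assoc[symmetric])
    qed simp
  qed
  then have "simes_t \<alpha> m x (indices_le c m x) \<le> r - 1"
    by (intro simes_t_le_if_large_subsets_in_simes_X) auto
  with \<open>1 \<le> r\<close> show ?thesis by linarith
qed

lemma simes_t_indices_le_bound:
  assumes "0 < \<alpha>" "0 \<le> x0" "x0 < 1" "0 \<le> c"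
  shows "real (simes_t \<alpha> m x (indices_le c m x))
    \<le> c * (real m - real (card (indices_le (x0 * \<alpha>) m x))) / (\<alpha> * (1 - x0))"
    (is "real ?T \<le> ?B")
proof (rule ccontr)
  assume "\<not> real ?T \<le> ?B"
  moreover have "0 \<le> ?B"
    using assms card_indices_le_le[of m x "x0 * \<alpha>"]
    by (intro divide_nonneg_pos) auto
  ultimately have "0 < real ?T" by linarith
  then have "1 \<le> ?T" by simp
  have "0 < \<alpha> * (1 - x0)" using assms by simp
  with \<open>\<not> real ?T \<le> ?B\<close>
  have "c * (real m - real (card (indices_le (x0 * \<alpha>) m x))) < real ?T * \<alpha> * (1 - x0)"
    by (simp add: not_le pos_divide_less_eq mult.assoc)
  from simes_t_indices_le_less[OF assms \<open>1 \<le> ?T\<close> this] show False by simp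
qed

section \<open>The selection rule\<close>

text \<open>The sets \<open>J\<^sub>m\<close> of the theorem, with \<open>c = x1 q \<alpha>\<close>, \<open>t = x0 \<alpha>\<close> and \<open>\<kappa> = \<pi>\<^sub>\<alpha> (1 - x0)\<close>
  (or \<open>c = t = \<alpha>\<close>, \<open>x1 = 1\<close>, \<open>\<kappa> = 0\<close> when \<open>P \<alpha> = 1\<close>).\<close>

definition simes_selection :: "real \<Rightarrow> real \<Rightarrow> real \<Rightarrow> real \<Rightarrow> nat \<Rightarrow> (nat \<Rightarrow> real) \<Rightarrow> nat set"
  where "simes_selection \<kappa> x1 t c m x =
    (if x1 * (real m - real (card (indices_le t m x))) \<le> \<kappa> * real (card (indices_le c m x))
     then indices_le c m x else {})"

lemma simes_selection_subset: "simes_selection \<kappa> x1 t c m x \<subseteq> {1..m}"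
  by (auto simp: simes_selection_def)

lemma simes_selection_cong:
  "(\<And>i. i \<in> {1..m} \<Longrightarrow> x i = x' i) \<Longrightarrow>
    simes_selection \<kappa> x1 t c m x = simes_selection \<kappa> x1 t c m x'"
  unfolding simes_selection_def by (metis (no_types, lifting) Collect_cong)

lemma real_card_simes_selection:
  "real (card (simes_selection \<kappa> x1 t c m x)) =
    (if x1 * (real m - real (card (indices_le t m x))) \<le> \<kappa> * real (card (indices_le c m x))
     then real (card (indices_le c m x)) else 0)"
  by (simp add: simes_selection_def)

lemma simes_q_selection_le:
  assumes "0 < \<alpha>" "0 \<le> x0" "x0 < 1" "0 \<le> x1" "0 \<le> q" "0 \<le> \<pi>"
  shows "simes_q \<alpha> m x (simes_selection (\<pi> * (1 - x0)) x1 (x0 * \<alpha>) (x1 * q * \<alpha>) m x) \<le> \<pi> * q"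
proof -
  let ?S = "indices_le (x1 * q * \<alpha>) m x" and ?N = "card (indices_le (x0 * \<alpha>) m x)"
  consider "simes_selection (\<pi> * (1 - x0)) x1 (x0 * \<alpha>) (x1 * q * \<alpha>) m x = {}"
    | "simes_selection (\<pi> * (1 - x0)) x1 (x0 * \<alpha>) (x1 * q * \<alpha>) m x = ?S" "?S \<noteq> {}"
      "x1 * (real m - real ?N) \<le> \<pi> * (1 - x0) * real (card ?S)"
    by (cases "x1 * (real m - real ?N) \<le> \<pi> * (1 - x0) * real (card ?S)"; cases "?S = {}")
      (simp_all add: simes_selection_def)
  then show ?thesis
  proof cases
    case 1
    with assms show ?thesis by (simp add: simes_q_def)
  next
    case 2
    have "real (simes_t \<alpha> m x ?S) \<le> x1 * q * \<alpha> * (real m - real ?N) / (\<alpha> * (1 - x0))"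
      using assms by (intro simes_t_indices_le_bound) auto
    also have "\<dots> = q * (x1 * (real m - real ?N)) / (1 - x0)"
      using assms by (simp add: field_simps)
    also have "\<dots> \<le> q * (\<pi> * (1 - x0) * real (card ?S)) / (1 - x0)"
      using 2 assms by (intro divide_right_mono mult_left_mono) auto
    also have "\<dots> = \<pi> * q * real (card ?S)"
      using assms by (simp add: field_simps)
    finally have "real (simes_t \<alpha> m x ?S) \<le> \<pi> * q * real (card ?S)" .
    moreover have "0 < real (card ?S)" using 2 by (simp add: card_gt_0_iff)
    ultimately show ?thesis
      using 2 by (auto simp: simes_q_def pos_divide_le_eq)
  qed
qed

lemma simes_q_selection_all_le:
  assumes "0 < \<alpha>"
  shows "simes_q \<alpha> m x (simes_selection 0 1 \<alpha> \<alpha> m x) = 0"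
proof (cases "indices_le \<alpha> m x = {1..m}")
  case True
  then have "card (indices_le \<alpha> m x) = m" by simp
  have "I \<in> simes_X \<alpha> m x" if "I \<subseteq> indices_le \<alpha> m x" "1 \<le> card I" for I
    by (rule mem_simes_X_by_two_thresholds[where t = \<alpha>, OF that(1) order_refl that(2)])
      (use \<open>card (indices_le \<alpha> m x) = m\<close> in simp)
  then have "simes_t \<alpha> m x (indices_le \<alpha> m x) = 0"
    using simes_t_le_if_large_subsets_in_simes_X[of _ 1] by fastforce
  then show ?thesis
    by (simp add: simes_q_def simes_selection_def)
next
  case False
  then have "card (indices_le \<alpha> m x) < m"
    using card_subset_eq[of "{1..m}" "indices_le \<alpha> m x"] card_indices_le_le[of m x \<alpha>]
    by fastforce
  then show ?thesis
    by (simp add: simes_q_def simes_selection_def)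
qed

lemma card_simes_selection_ge_if_counts_close:
  assumes "0 < m" "0 \<le> x1" "0 \<le> \<kappa>" "\<epsilon> \<le> b / 2"
    and gap: "(x1 + \<kappa>) * \<epsilon> \<le> \<kappa> * b - x1 * (1 - a)"
    and close_t: "\<bar>real (card (indices_le t m x)) / real m - a\<bar> < \<epsilon>"
    and close_c: "\<bar>real (card (indices_le c m x)) / real m - b\<bar> < \<epsilon>"
  shows "b / 2 \<le> real (card (simes_selection \<kappa> x1 t c m x)) / real m"
proof -
  let ?Nt = "real (card (indices_le t m x))" and ?Nc = "real (card (indices_le c m x))"
  have "a - \<epsilon> < ?Nt / real m" "b - \<epsilon> < ?Nc / real m"
    using close_t close_c by linarith+
  then have "real m * (a - \<epsilon>) < ?Nt" "real m * (b - \<epsilon>) < ?Nc"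
    using \<open>0 < m\<close> by (simp_all add: pos_less_divide_eq mult.commute)
  then have "x1 * (real m - ?Nt) \<le> x1 * (real m * (1 - a + \<epsilon>))"
    using \<open>0 \<le> x1\<close> by (intro mult_left_mono) (simp_all add: algebra_simps)
  also have "\<dots> = real m * (x1 * (1 - a + \<epsilon>))" by simp
  also have "\<dots> \<le> real m * (\<kappa> * (b - \<epsilon>))"
    using gap by (intro mult_left_mono) (simp_all add: algebra_simps)
  also have "\<dots> \<le> \<kappa> * ?Nc"
    using \<open>real m * (b - \<epsilon>) < ?Nc\<close> \<open>0 \<le> \<kappa>\<close> by (simp add: mult.left_commute mult_left_mono)
  finally have "x1 * (real m - ?Nt) \<le> \<kappa> * ?Nc" .
  moreover have "b / 2 \<le> ?Nc / real m"
    using close_c \<open>\<epsilon> \<le> b / 2\<close> by linarith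
  ultimately show ?thesis
    by (simp add: simes_selection_def)
qed

lemma card_indices_le_eq_iff: "card (indices_le a m x) = m \<longleftrightarrow> (\<forall>i\<in>{1..m}. x i \<le> a)"
proof
  assume "card (indices_le a m x) = m"
  then have "indices_le a m x = {1..m}"
    by (intro card_subset_eq) auto
  then show "\<forall>i\<in>{1..m}. x i \<le> a" by blast
next
  assume "\<forall>i\<in>{1..m}. x i \<le> a"
  then have "indices_le a m x = {1..m}" by blast
  then show "card (indices_le a m x) = m" by simp
qed

lemma card_simes_selection_all_iff:
  assumes "0 < m"
  shows "1 \<le> real (card (simes_selection 0 1 a a m x)) / real m \<longleftrightarrow> (\<forall>i\<in>{1..m}. x i \<le> a)"
proof -
  have "real m \<le> real (card (indices_le a m x)) \<longleftrightarrow> card (indices_le a m x) = m"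
    using card_indices_le_le[of m x a] by linarith
  then show ?thesis
    using \<open>0 < m\<close> card_indices_le_eq_iff[of m x a]
    by (auto simp: real_card_simes_selection pos_le_divide_eq)
qed

section \<open>The constant \<open>\<pi>\<^sub>a\<close>\<close>

lemma pibar_less_witness:
  assumes P_le_1: "\<And>x. x \<in> {0..1} \<Longrightarrow> P x \<le> 1" and "0 \<le> a" "a \<le> 1" "P a < 1"
    and "pibar P a < r"
  obtains x where "x \<in> {0..<1}" "1 - P (x * a) < r * (1 - x)"
proof -
  have "bdd_below ((\<lambda>x. (1 - P (x * a)) / (1 - x)) ` {0..<1})"
  proof (rule bdd_belowI2[of _ 0])
    fix x :: real assume "x \<in> {0..<1}"
    with assms(2,3) have "x * a \<in> {0..1}" by (auto simp: mult_le_one)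
    with P_le_1 \<open>x \<in> {0..<1}\<close> show "0 \<le> (1 - P (x * a)) / (1 - x)" by fastforce
  qed
  moreover have "(INF x\<in>{0..<1}. (1 - P (x * a)) / (1 - x)) < r"
    using assms(4,5) by (simp add: pibar_def)
  ultimately obtain x where "x \<in> {0..<1}" "(1 - P (x * a)) / (1 - x) < r"
    by (auto simp: cINF_less_iff)
  then show ?thesis
    using that by (auto simp: pos_divide_less_eq)
qed

lemma one_minus_le_pibar:
  assumes P_le_1: "\<And>x. x \<in> {0..1} \<Longrightarrow> P x \<le> 1" and "mono_on {0..1} P"
    and "0 \<le> a" "a \<le> 1" "P a < 1"
  shows "1 - P a \<le> pibar P a"
proof -
  have "pibar P a = (INF x\<in>{0..<1}. (1 - P (x * a)) / (1 - x))"
    using \<open>P a < 1\<close> by (simp add: pibar_def)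
  also have "1 - P a \<le> \<dots>"
  proof (rule cINF_greatest)
    fix x :: real assume "x \<in> {0..<1}"
    with assms(3,4) have "x * a \<in> {0..1}" "x * a \<le> a"
      by (auto simp: mult_le_one mult_left_le_one_le)
    then have "1 - P a \<le> 1 - P (x * a)"
      using mono_onD[OF \<open>mono_on {0..1} P\<close>] assms(3,4) by auto
    also have "\<dots> \<le> (1 - P (x * a)) / (1 - x)"
      using \<open>x \<in> {0..<1}\<close> P_le_1[OF \<open>x * a \<in> {0..1}\<close>] by (auto simp: le_divide_eq mult_left_le)
    finally show "1 - P a \<le> (1 - P (x * a)) / (1 - x)" .
  qed auto
  finally show ?thesis .
qed

section \<open>Independent p-values\<close>

lemma real_card_indices_le_eq_sum:
  "real (card (indices_le t m x)) = (\<Sum>i\<in>{1..m}. if x i \<le> t then 1 else 0)"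
  by (simp add: sum.inter_filter[symmetric])

lemma (in prob_space) prob_tendsto_1_if_compl_covered:
  assumes "\<And>m. S m \<in> events" "\<And>m. A m \<in> events" "\<And>m. B m \<in> events"
    and "(\<lambda>m. prob (A m)) \<longlonglongrightarrow> 0" "(\<lambda>m. prob (B m)) \<longlonglongrightarrow> 0"
    and "\<And>m. 0 < m \<Longrightarrow> space M - S m \<subseteq> A m \<union> B m"
  shows "(\<lambda>m. prob (S m)) \<longlonglongrightarrow> 1"
proof (rule tendsto_sandwich[of "\<lambda>m. 1 - prob (A m) - prob (B m)" _ _ "\<lambda>_. 1"])
  show "eventually (\<lambda>m. 1 - prob (A m) - prob (B m) \<le> prob (S m)) sequentially"
    using eventually_gt_at_top[of 0]
  proof (rule eventually_mono)
    fix m :: nat assume "0 < m"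
    then have "space M - S m \<subseteq> A m \<union> B m" by (rule assms(6))
    then have "prob (space M - S m) \<le> prob (A m) + prob (B m)"
      using assms(1-3) finite_measure_mono[of "space M - S m" "A m \<union> B m"]
        measure_Un_le[where M = M and A = "A m" and B = "B m"] by auto
    then show "1 - prob (A m) - prob (B m) \<le> prob (S m)"
      using prob_compl[OF assms(1)] by simp
  qed
  show "(\<lambda>m. 1 - prob (A m) - prob (B m)) \<longlonglongrightarrow> 1"
    using tendsto_diff[OF tendsto_diff[OF tendsto_const assms(4)] assms(5)] by simp
qed auto

text \<open>\<open>P\<close> is only used as the common distribution function of the p-values.\<close>

locale iid_pvalues = prob_space M for M :: "'w measure" +
  fixes p :: "nat \<Rightarrow> 'w \<Rightarrow> real" and P :: "real \<Rightarrow> real"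
  assumes p_measurable: "\<And>i. 1 \<le> i \<Longrightarrow> p i \<in> borel_measurable M"
    and prob_p_le: "\<And>i x. 1 \<le> i \<Longrightarrow> x \<in> {0..1} \<Longrightarrow> prob {\<omega>\<in>space M. p i \<omega> \<le> x} = P x"
    and p_indep: "indep_vars (\<lambda>_. borel) p {1..}"
begin

lemma P_le_1: "x \<in> {0..1} \<Longrightarrow> P x \<le> 1"
  using prob_p_le[of 1 x, symmetric] by simp

lemma P_mono: "mono_on {0..1} P"
proof (rule mono_onI)
  fix x y :: real assume "x \<in> {0..1}" "y \<in> {0..1}" "x \<le> y"
  have [measurable]: "p 1 \<in> borel_measurable M" by (rule p_measurable) simp
  have "{\<omega>\<in>space M. p 1 \<omega> \<le> y} \<in> events" by measurable
  then have "prob {\<omega>\<in>space M. p 1 \<omega> \<le> x} \<le> prob {\<omega>\<in>space M. p 1 \<omega> \<le> y}"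
    using \<open>x \<le> y\<close> by (intro finite_measure_mono) auto
  with \<open>x \<in> {0..1}\<close> \<open>y \<in> {0..1}\<close> show "P x \<le> P y" by (simp add: prob_p_le)
qed

lemma measurable_indicator_p_le:
  "1 \<le> i \<Longrightarrow> (\<lambda>\<omega>. if p i \<omega> \<le> t then 1 else 0 :: real) \<in> borel_measurable M"
  using p_measurable[of i] by measurable

lemma measurable_card_indices_le [measurable]:
  "(\<lambda>\<omega>. real (card (indices_le t m (\<lambda>i. p i \<omega>)))) \<in> borel_measurable M"
  unfolding real_card_indices_le_eq_sum
  by (rule borel_measurable_sum) (simp add: measurable_indicator_p_le)

lemma empirical_cdf_deviation_le:
  assumes "t \<in> {0..1}" "0 < \<epsilon>" "1 \<le> m"
  shows "prob {\<omega>\<in>space M. \<epsilon> \<le> \<bar>real (card (indices_le t m (\<lambda>i. p i \<omega>))) / real m - P t\<bar>}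
    \<le> 2 * exp (- 2 * \<epsilon>\<^sup>2 * real m)"
proof -
  define X where "X = (\<lambda>i \<omega>. if p i \<omega> \<le> t then 1 else 0 :: real)"
  have "indep_vars (\<lambda>_. borel) p {1..m}"
    by (rule indep_vars_subset[OF p_indep]) auto
  then have "indep_vars (\<lambda>_. borel) (\<lambda>i \<omega>. (\<lambda>v. if v \<le> t then 1 else 0 :: real) (p i \<omega>)) {1..m}"
    by (rule indep_vars_compose2) measurable
  then have "indep_vars (\<lambda>_. borel) X {1..m}"
    by (simp add: X_def)
  then interpret Hoeffding_ineq M "{1..m}" X "\<lambda>_. 0" "\<lambda>_. 1" "\<Sum>i\<in>{1..m}. expectation (X i)"
    by unfold_locales (auto simp: X_def)
  have "expectation (X i) = P t" if "i \<in> {1..m}" for i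
  proof -
    have [measurable]: "p i \<in> borel_measurable M" using that by (intro p_measurable) simp
    have "expectation (X i) = expectation (indicator {\<omega>\<in>space M. p i \<omega> \<le> t})"
      by (rule Bochner_Integration.integral_cong) (auto simp: X_def indicator_def)
    also have "\<dots> = prob {\<omega>\<in>space M. p i \<omega> \<le> t}" by simp
    finally show ?thesis using that \<open>t \<in> {0..1}\<close> by (simp add: prob_p_le)
  qed
  then have mean: "(\<Sum>i\<in>{1..m}. expectation (X i)) = real m * P t" by simp
  have "{\<omega>\<in>space M. \<epsilon> \<le> \<bar>real (card (indices_le t m (\<lambda>i. p i \<omega>))) / real m - P t\<bar>}
    = {\<omega>\<in>space M. \<epsilon> * real m \<le> \<bar>(\<Sum>i\<in>{1..m}. X i \<omega>) - real m * P t\<bar>}"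
  proof -
    have "\<bar>S / real m - P t\<bar> = \<bar>S - real m * P t\<bar> / real m" for S
    proof -
      have "S / real m - P t = (S - real m * P t) / real m"
        using \<open>1 \<le> m\<close> by (simp add: field_simps)
      then show ?thesis by simp
    qed
    then show ?thesis
      using \<open>1 \<le> m\<close> unfolding X_def real_card_indices_le_eq_sum
      by (simp add: pos_le_divide_eq mult.commute)
  qed
  also have "\<dots> = {\<omega>\<in>space M. \<epsilon> * real m \<le> \<bar>(\<Sum>i\<in>{1..m}. X i \<omega>) - (\<Sum>i\<in>{1..m}. expectation (X i))\<bar>}"
    by (simp only: mean)
  also have "prob \<dots> \<le> 2 * exp (- 2 * (\<epsilon> * real m)\<^sup>2 / (\<Sum>i\<in>{1..m}. (1 - 0)\<^sup>2))"
    using assms by (intro Hoeffding_ineq_abs_ge) auto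
  also have "\<dots> = 2 * exp (- 2 * \<epsilon>\<^sup>2 * real m)"
    using \<open>1 \<le> m\<close> by (simp add: power2_eq_square)
  finally show ?thesis .
qed

lemma empirical_cdf_consistent:
  assumes "t \<in> {0..1}" "0 < \<epsilon>"
  shows "(\<lambda>m. prob {\<omega>\<in>space M. \<epsilon> \<le> \<bar>real (card (indices_le t m (\<lambda>i. p i \<omega>))) / real m - P t\<bar>})
    \<longlonglongrightarrow> 0"
proof (rule tendsto_sandwich[of "\<lambda>_. 0" _ _ "\<lambda>m. 2 * exp (- 2 * \<epsilon>\<^sup>2 * real m)"])
  show "eventually (\<lambda>m. prob {\<omega>\<in>space M. \<epsilon> \<le> \<bar>real (card (indices_le t m (\<lambda>i. p i \<omega>))) / real m - P t\<bar>}
      \<le> 2 * exp (- 2 * \<epsilon>\<^sup>2 * real m)) sequentially"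
    using eventually_ge_at_top[of 1] by eventually_elim (rule empirical_cdf_deviation_le[OF assms])
  show "(\<lambda>m. 2 * exp (- 2 * \<epsilon>\<^sup>2 * real m)) \<longlonglongrightarrow> 0"
    using \<open>0 < \<epsilon>\<close> by real_asymp
qed auto

lemma measurable_card_simes_selection [measurable]:
  "(\<lambda>\<omega>. real (card (simes_selection \<kappa> x1 t c m (\<lambda>i. p i \<omega>)))) \<in> borel_measurable M"
  unfolding real_card_simes_selection by measurable

lemma prob_simes_selection_tendsto_1:
  assumes "t \<in> {0..1}" "c \<in> {0..1}" "0 \<le> x1" "0 \<le> \<kappa>" "0 < P c"
    and gap: "x1 * (1 - P t) < \<kappa> * P c"
  shows "(\<lambda>m. prob {\<omega>\<in>space M. P c / 2 \<le> real (card (simes_selection \<kappa> x1 t c m (\<lambda>i. p i \<omega>))) / real m})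
    \<longlonglongrightarrow> 1"
proof -
  define \<delta> where "\<delta> = \<kappa> * P c - x1 * (1 - P t)"
  define \<epsilon> where "\<epsilon> = min (P c / 2) (\<delta> / (x1 + \<kappa> + 1))"
  have "0 < \<epsilon>" using assms by (simp add: \<epsilon>_def \<delta>_def)
  have "\<epsilon> \<le> P c / 2" unfolding \<epsilon>_def by (rule min.cobounded1)
  have "\<epsilon> \<le> \<delta> / (x1 + \<kappa> + 1)" unfolding \<epsilon>_def by (rule min.cobounded2)
  then have "(x1 + \<kappa> + 1) * \<epsilon> \<le> \<delta>"
    using assms(3,4) by (simp add: pos_le_divide_eq mult.commute)
  then have "(x1 + \<kappa>) * \<epsilon> \<le> \<kappa> * P c - x1 * (1 - P t)"
    using \<open>0 < \<epsilon>\<close> by (simp add: \<delta>_def algebra_simps)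
  note close = card_simes_selection_ge_if_counts_close[OF _ assms(3,4) \<open>\<epsilon> \<le> P c / 2\<close> this]
  define D where "D s m = {\<omega>\<in>space M. \<epsilon> \<le> \<bar>real (card (indices_le s m (\<lambda>i. p i \<omega>))) / real m - P s\<bar>}"
    for s m
  show ?thesis
  proof (rule prob_tendsto_1_if_compl_covered[where A = "D t" and B = "D c"])
    have "(\<lambda>m. prob (D s m)) \<longlonglongrightarrow> 0" if "s \<in> {0..1}" for s
      unfolding D_def using that \<open>0 < \<epsilon>\<close> by (rule empirical_cdf_consistent)
    then show "(\<lambda>m. prob (D t m)) \<longlonglongrightarrow> 0" "(\<lambda>m. prob (D c m)) \<longlonglongrightarrow> 0"
      using assms(1,2) by auto
    show "space M - {\<omega>\<in>space M. P c / 2 \<le> real (card (simes_selection \<kappa> x1 t c m (\<lambda>i. p i \<omega>))) / real m}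
      \<subseteq> D t m \<union> D c m" if "0 < m" for m
    proof
      fix \<omega> assume \<omega>: "\<omega> \<in> space M - {\<omega>\<in>space M. P c / 2 \<le> real (card (simes_selection \<kappa> x1 t c m (\<lambda>i. p i \<omega>))) / real m}"
      show "\<omega> \<in> D t m \<union> D c m"
      proof (rule ccontr)
        assume "\<omega> \<notin> D t m \<union> D c m"
        with \<omega> have "\<bar>real (card (indices_le t m (\<lambda>i. p i \<omega>))) / real m - P t\<bar> < \<epsilon>"
          "\<bar>real (card (indices_le c m (\<lambda>i. p i \<omega>))) / real m - P c\<bar> < \<epsilon>"
          unfolding D_def by auto
        from close[OF \<open>0 < m\<close> this] \<omega> show False by simp
      qed
    qed
  qed (unfold D_def, measurable)
qed

lemma prob_simes_selection_all:
  assumes "a \<in> {0..1}" "P a = 1" "0 < m"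
  shows "prob {\<omega>\<in>space M. 1 \<le> real (card (simes_selection 0 1 a a m (\<lambda>i. p i \<omega>))) / real m} = 1"
proof -
  have "AE \<omega> in M. p i \<omega> \<le> a" if "i \<in> {1..m}" for i
  proof -
    have [measurable]: "p i \<in> borel_measurable M" using that by (intro p_measurable) simp
    have "prob {\<omega>\<in>space M. p i \<omega> \<le> a} = 1" using that assms by (simp add: prob_p_le)
    then show ?thesis by (subst (asm) prob_Collect_eq_1) measurable
  qed
  then have "AE \<omega> in M. \<forall>i\<in>{1..m}. p i \<omega> \<le> a"
    by (intro AE_finite_allI) simp_all
  then have "AE \<omega> in M. 1 \<le> real (card (simes_selection 0 1 a a m (\<lambda>i. p i \<omega>))) / real m"
    by eventually_elim (simp add: card_simes_selection_all_iff[OF \<open>0 < m\<close>])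
  then show ?thesis
    by (subst prob_Collect_eq_1) measurable
qed

lemma simes_detectable_parameters:
  assumes "0 < \<alpha>" "\<alpha> \<le> 1" "0 \<le> q" "q \<le> 1" "P \<alpha> < 1" "simes_detectable P (q * \<alpha>)"
  obtains x0 x1 where "x0 \<in> {0..<1}" "x1 \<in> {0..<1}" "x1 < P (x1 * q * \<alpha>)"
    "x1 * (1 - P (x0 * \<alpha>)) < pibar P \<alpha> * (1 - x0) * P (x1 * q * \<alpha>)"
proof -
  have "q * \<alpha> \<in> {0..1}" "q * \<alpha> \<le> \<alpha>"
    using assms by (auto simp: mult_le_one mult_left_le_one_le)
  then have "P (q * \<alpha>) < 1"
    using mono_onD[OF P_mono, of "q * \<alpha>" \<alpha>] assms by auto
  moreover have "pibar P (q * \<alpha>) < 1"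
    using assms(6) by (simp add: simes_detectable_def)
  ultimately obtain x1 where x1: "x1 \<in> {0..<1}" "1 - P (x1 * (q * \<alpha>)) < 1 * (1 - x1)"
    using \<open>q * \<alpha> \<in> {0..1}\<close> by (auto intro: pibar_less_witness[OF P_le_1])
  then have "x1 < P (x1 * q * \<alpha>)" by (simp add: mult.assoc)
  have "0 < pibar P \<alpha>"
    using one_minus_le_pibar[OF P_le_1 P_mono, of \<alpha>] assms by auto
  obtain x0 where "x0 \<in> {0..<1}" "x1 * (1 - P (x0 * \<alpha>)) < pibar P \<alpha> * (1 - x0) * P (x1 * q * \<alpha>)"
  proof (cases "x1 = 0")
    case True
    with \<open>0 < pibar P \<alpha>\<close> \<open>x1 < P (x1 * q * \<alpha>)\<close> show ?thesis by (intro that[of 0]) auto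
  next
    case False
    with x1 have "0 < x1" by simp
    with \<open>0 < pibar P \<alpha>\<close> \<open>x1 < P (x1 * q * \<alpha>)\<close>
    have r: "pibar P \<alpha> < pibar P \<alpha> * P (x1 * q * \<alpha>) / x1"
      by (simp add: less_divide_eq)
    obtain x0 where "x0 \<in> {0..<1}"
      "1 - P (x0 * \<alpha>) < pibar P \<alpha> * P (x1 * q * \<alpha>) / x1 * (1 - x0)"
      by (rule pibar_less_witness[OF P_le_1 _ _ _ r]) (use assms in auto)
    with \<open>0 < x1\<close> show ?thesis
      by (intro that[of x0]) (auto simp: field_simps)
  qed
  with x1 \<open>x1 < P (x1 * q * \<alpha>)\<close> show ?thesis using that by auto
qed

end

theorem theorem2:
  fixes M :: "'w measure" and p :: "nat \<Rightarrow> 'w \<Rightarrow> real"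
    and P P1 :: "real \<Rightarrow> real" and \<gamma> \<alpha> q :: real
  assumes "prob_space M"
    and alpha: "0 < \<alpha>" "\<alpha> < 1"
    and gamma: "0 \<le> \<gamma>" "\<gamma> \<le> 1"
    and P1_mono: "mono_on {0..1} P1"
    and P1_range: "\<And>x. x \<in> {0..1} \<Longrightarrow> 0 \<le> P1 x \<and> P1 x \<le> 1"
    and P1_one: "P1 1 = 1"
    and P1_rcont: "\<And>x. x \<in> {0..<1} \<Longrightarrow> continuous (at x within {x..1}) P1"
    and P1_ge: "\<And>x. x \<in> {0..1} \<Longrightarrow> P1 x \<ge> x"
    and P_mix: "\<And>x. x \<in> {0..1} \<Longrightarrow> P x = \<gamma> * x + (1 - \<gamma>) * P1 x"
    and p_rv: "\<And>i. i \<ge> 1 \<Longrightarrow> p i \<in> borel_measurable M"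
    and p_range: "\<And>i. i \<ge> 1 \<Longrightarrow> AE \<omega> in M. p i \<omega> \<in> {0..1}"
    and p_dist: "\<And>i x. i \<ge> 1 \<Longrightarrow> x \<in> {0..1} \<Longrightarrow>
                    measure M {\<omega>\<in>space M. p i \<omega> \<le> x} = P x"
    and p_indep: "prob_space.indep_vars M (\<lambda>_. borel) p {1..}"
    and q: "0 \<le> q" "q \<le> 1"
    and detect: "simes_detectable P (q * \<alpha>)"
  shows "\<exists>J :: nat \<Rightarrow> (nat \<Rightarrow> real) \<Rightarrow> nat set.
           (\<forall>m x. J m x \<subseteq> {1..m}) \<and>
           (\<forall>m x x'. (\<forall>i\<in>{1..m}. x i = x' i) \<longrightarrow> J m x = J m x') \<and>
           (\<forall>m\<ge>1. \<forall>\<omega>\<in>space M.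
              simes_q \<alpha> m (\<lambda>i. p i \<omega>) (J m (\<lambda>i. p i \<omega>)) \<le> pibar P \<alpha> * q) \<and>
           (\<exists>y>0. (\<lambda>m. measure M {\<omega>\<in>space M.
                      real (card (J m (\<lambda>i. p i \<omega>))) / real m \<ge> y}) \<longlonglongrightarrow> 1)"
proof -
  interpret iid_pvalues M p P
    by (rule iid_pvalues.intro[OF \<open>prob_space M\<close>]) (unfold_locales; fact p_rv p_dist p_indep)
  show ?thesis
  proof (cases "P \<alpha> < 1")
    case False
    with P_le_1[of \<alpha>] alpha have "P \<alpha> = 1" by auto
    then have "pibar P \<alpha> = 0" by (simp add: pibar_def)
    have "eventually (\<lambda>m. prob {\<omega>\<in>space M.
        1 \<le> real (card (simes_selection 0 1 \<alpha> \<alpha> m (\<lambda>i. p i \<omega>))) / real m} = 1) sequentially"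
      using eventually_gt_at_top[of 0]
      by eventually_elim (rule prob_simes_selection_all, use alpha \<open>P \<alpha> = 1\<close> in auto)
    then show ?thesis
      using alpha \<open>pibar P \<alpha> = 0\<close>
      by (intro exI[of _ "simes_selection 0 1 \<alpha> \<alpha>"] conjI allI impI ballI exI[of _ "1::real"]
          simes_selection_subset simes_selection_cong tendsto_eventually)
        (simp_all add: simes_q_selection_all_le)
  next
    case True
    obtain x0 x1 where x: "x0 \<in> {0..<1}" "x1 \<in> {0..<1}" "x1 < P (x1 * q * \<alpha>)"
      "x1 * (1 - P (x0 * \<alpha>)) < pibar P \<alpha> * (1 - x0) * P (x1 * q * \<alpha>)"
      by (rule simes_detectable_parameters) (use alpha q True detect in auto)
    have "0 \<le> pibar P \<alpha>"
      using one_minus_le_pibar[OF P_le_1 P_mono, of \<alpha>] alpha True by auto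
    moreover have "x0 * \<alpha> \<in> {0..1}" "x1 * q * \<alpha> \<in> {0..1}"
      using x alpha q by (auto simp: mult_le_one)
    ultimately show ?thesis
      using x alpha q
      by (intro exI[of _ "simes_selection (pibar P \<alpha> * (1 - x0)) x1 (x0 * \<alpha>) (x1 * q * \<alpha>)"]
          exI[of _ "P (x1 * q * \<alpha>) / 2"] conjI allI impI ballI
          simes_selection_subset simes_selection_cong simes_q_selection_le
          prob_simes_selection_tendsto_1) auto
  qed
qed

end
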